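(* Let $G$ be a finite group and let $k$ be the core of $|F(G)|$. Then for every $i \geq 0$, \[ \nu_{i+1}(G) = [F(G), \nu_i(G)]\, \nu_i(G)^k , \] where $\nu_i(G)^k$ denotes the subgroup generated by all $k$-th powers of elements of $\nu_i(G)$.
   Context: For a finite group $G$, $F(G)$ denotes its Fitting subgroup (the largest nilpotent normal subgroup). The $F$-central series of $G$ is defined by $\nu_0(G)=F(G)$ and, for $i\ge 0$, $\nu_{i+1}(G)$ is the smallest normal subgroup $N$ of $F(G)$ with $N\le \nu_i(G)$ such that $\nu_i(G)/N$ is centralized by $F(G)$ and is a direct product of elementary abelian groups. The core of a positive integer $n=p_1^{e_1}\cdots p_r^{e_r}$ (distinct primes $p_j$, all $e_j\ge 1$) is $p_1\cdots p_r$. *)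

theory Defs
  imports "HOL-Algebra.Algebra" "HOL-Computational_Algebra.Primes"
begin

definition comm_subgroup :: "('a, 'b) monoid_scheme \<Rightarrow> 'a set \<Rightarrow> 'a set \<Rightarrow> 'a set" where
  "comm_subgroup G A B = generate G
     {a \<otimes>\<^bsub>G\<^esub> b \<otimes>\<^bsub>G\<^esub> inv\<^bsub>G\<^esub> a \<otimes>\<^bsub>G\<^esub> inv\<^bsub>G\<^esub> b | a b. a \<in> A \<and> b \<in> B}"

primrec lower_central :: "('a, 'b) monoid_scheme \<Rightarrow> nat \<Rightarrow> 'a set" where
  "lower_central G 0 = carrier G"
| "lower_central G (Suc n) = comm_subgroup G (carrier G) (lower_central G n)"

definition nilpotent :: "('a, 'b) monoid_scheme \<Rightarrow> bool" where
  "nilpotent G \<longleftrightarrow> group G \<and> (\<exists>n. lower_central G n = {\<one>\<^bsub>G\<^esub>})"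

definition Fitting :: "('a, 'b) monoid_scheme \<Rightarrow> 'a set" where
  "Fitting G = (THE N. N \<lhd> G \<and> nilpotent (G\<lparr>carrier := N\<rparr>) \<and>
      (\<forall>M. M \<lhd> G \<and> nilpotent (G\<lparr>carrier := M\<rparr>) \<longrightarrow> M \<subseteq> N))"

definition elementary_abelian :: "('a, 'b) monoid_scheme \<Rightarrow> bool" where
  "elementary_abelian E \<longleftrightarrow> comm_group E \<and>
     (\<exists>p::nat. Factorial_Ring.prime p \<and> (\<forall>x \<in> carrier E. x [^]\<^bsub>E\<^esub> p = \<one>\<^bsub>E\<^esub>))"

(* Q is (isomorphic to) a direct product of finitely many elementary abelian groups;
   the factors may be taken to be subgroups of Q itself *)
definition dprod_elem_abelian :: "('a, 'b) monoid_scheme \<Rightarrow> bool" where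
  "dprod_elem_abelian Q \<longleftrightarrow> (\<exists>(I::nat set) H. finite I \<and>
     (\<forall>i \<in> I. subgroup (H i) Q \<and> elementary_abelian (Q\<lparr>carrier := H i\<rparr>)) \<and>
     Q \<cong> product_group I (\<lambda>i. Q\<lparr>carrier := H i\<rparr>))"

definition Fstep_ok :: "('a, 'b) monoid_scheme \<Rightarrow> 'a set \<Rightarrow> 'a set \<Rightarrow> bool" where
  "Fstep_ok G V N \<longleftrightarrow>
     N \<lhd> (G\<lparr>carrier := Fitting G\<rparr>) \<and> N \<subseteq> V \<and>
     (\<forall>f \<in> Fitting G. \<forall>x \<in> V. f \<otimes>\<^bsub>G\<^esub> x \<otimes>\<^bsub>G\<^esub> inv\<^bsub>G\<^esub> f \<otimes>\<^bsub>G\<^esub> inv\<^bsub>G\<^esub> x \<in> N) \<and>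
     dprod_elem_abelian ((G\<lparr>carrier := V\<rparr>) Mod N)"

primrec Fcentral :: "('a, 'b) monoid_scheme \<Rightarrow> nat \<Rightarrow> 'a set" where
  "Fcentral G 0 = Fitting G"
| "Fcentral G (Suc i) = (THE N. Fstep_ok G (Fcentral G i) N \<and>
      (\<forall>M. Fstep_ok G (Fcentral G i) M \<longrightarrow> N \<subseteq> M))"

definition core :: "nat \<Rightarrow> nat" where
  "core n = \<Prod>(prime_factors n)"

end

theory Submission
  imports Defs
begin

text \<open>Since a product of two normal nilpotent subgroups is nilpotent (Fitting's theorem), a finite
  group has a greatest normal nilpotent subgroup \<open>F\<close>. For \<open>V \<unlhd> F\<close>, a normal subgroup \<open>N \<le> V\<close>
  of \<open>F\<close> is admissible exactly when \<open>[F, V] \<le> N\<close> and \<open>V/N\<close> is abelian of exponent dividing the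
  core \<open>k\<close> of \<open>|F|\<close>: a direct product of elementary abelian groups whose order divides \<open>|F|\<close>
  has exponent dividing \<open>k\<close>, and conversely an abelian group of squarefree exponent \<open>k\<close> splits
  into its subgroups of prime exponent \<open>p | k\<close>, the projections being \<open>y \<mapsto> y [^] e\<^sub>p\<close> with
  \<open>e\<^sub>p \<equiv> 1 (mod p)\<close> and \<open>e\<^sub>p \<equiv> 0 (mod q)\<close> for the other primes \<open>q | k\<close>. Hence
  \<open>[F, V] V\<^sup>k\<close> is the least admissible subgroup.\<close>

section \<open>Commutators\<close>

context group begin

lemma inv_mult_cancel_left: "g \<in> carrier G \<Longrightarrow> x \<in> carrier G \<Longrightarrow> inv g \<otimes> (g \<otimes> x) = x"
  by (simp add: m_assoc[symmetric])

lemma mult_inv_cancel_left: "g \<in> carrier G \<Longrightarrow> x \<in> carrier G \<Longrightarrow> g \<otimes> (inv g \<otimes> x) = x"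
  by (simp add: m_assoc[symmetric])

lemmas cancel_simps = m_assoc inv_mult_group inv_mult_cancel_left mult_inv_cancel_left

lemma conj_commutator:
  assumes "g \<in> carrier G" "a \<in> carrier G" "b \<in> carrier G"
  shows "g \<otimes> (a \<otimes> b \<otimes> inv a \<otimes> inv b) \<otimes> inv g =
    (g \<otimes> a \<otimes> inv g) \<otimes> (g \<otimes> b \<otimes> inv g) \<otimes> inv (g \<otimes> a \<otimes> inv g) \<otimes> inv (g \<otimes> b \<otimes> inv g)"
  using assms by (simp add: cancel_simps)

lemma commutator_inv_right:
  assumes "x \<in> carrier G" "s \<in> carrier G"
  shows "x \<otimes> inv s \<otimes> inv x \<otimes> inv (inv s) = inv s \<otimes> inv (x \<otimes> s \<otimes> inv x \<otimes> inv s) \<otimes> inv (inv s)"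
  using assms by (simp add: cancel_simps)

lemma commutator_mult_right:
  assumes "x \<in> carrier G" "s \<in> carrier G" "t \<in> carrier G"
  shows "x \<otimes> (s \<otimes> t) \<otimes> inv x \<otimes> inv (s \<otimes> t) =
    (x \<otimes> s \<otimes> inv x \<otimes> inv s) \<otimes> (s \<otimes> (x \<otimes> t \<otimes> inv x \<otimes> inv t) \<otimes> inv s)"
  using assms by (simp add: cancel_simps)

lemma commutator_mult_left:
  assumes "a \<in> carrier G" "b \<in> carrier G" "s \<in> carrier G"
  shows "(a \<otimes> b) \<otimes> s \<otimes> inv (a \<otimes> b) \<otimes> inv s =
    (a \<otimes> (b \<otimes> s \<otimes> inv b \<otimes> inv s) \<otimes> inv a) \<otimes> (a \<otimes> s \<otimes> inv a \<otimes> inv s)"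
  using assms by (simp add: cancel_simps)

lemma conj_nat_pow:
  assumes g: "g \<in> carrier G" and x: "x \<in> carrier G"
  shows "g \<otimes> x [^] (n::nat) \<otimes> inv g = (g \<otimes> x \<otimes> inv g) [^] n"
proof (induction n)
  case 0
  then show ?case using g by simp
next
  case (Suc n)
  have "(g \<otimes> x \<otimes> inv g) [^] Suc n = (g \<otimes> x [^] n \<otimes> inv g) \<otimes> (g \<otimes> x \<otimes> inv g)"
    using Suc by simp
  also have "\<dots> = g \<otimes> x [^] Suc n \<otimes> inv g"
    using g x by (simp add: cancel_simps)
  finally show ?case by simp
qed

lemma subgroup_commutator_closed:
  assumes "subgroup A G" "a \<in> A" "b \<in> A"
  shows "a \<otimes> b \<otimes> inv a \<otimes> inv b \<in> A"
  using assms by (meson subgroup.m_closed subgroup.m_inv_closed)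

lemma normal_commutator_closed_right:
  assumes N: "N \<lhd> G" and "a \<in> carrier G" "y \<in> N"
  shows "a \<otimes> y \<otimes> inv a \<otimes> inv y \<in> N"
  using assms normal.inv_op_closed2[OF N] normal_imp_subgroup[OF N]
  by (meson subgroup.m_closed subgroup.m_inv_closed)

lemma normal_commutator_closed_left:
  assumes N: "N \<lhd> G" and a: "a \<in> carrier G" and y: "y \<in> N"
  shows "y \<otimes> a \<otimes> inv y \<otimes> inv a \<in> N"
proof -
  have H: "subgroup N G" by (rule normal_imp_subgroup[OF N])
  have "y \<otimes> (a \<otimes> inv y \<otimes> inv a) \<in> N"
    using H y normal.inv_op_closed2[OF N a subgroup.m_inv_closed[OF H y]]
    by (rule subgroup.m_closed)
  then show ?thesis using a y subgroup.mem_carrier[OF H] by (simp add: m_assoc)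
qed

lemma normal_set_mult:
  assumes A: "A \<lhd> G" and B: "B \<lhd> G"
  shows "A <#> B \<lhd> G"
proof (rule normal_invI)
  show "subgroup (A <#> B) G" by (rule mult_norm_subgroup[OF A normal_imp_subgroup[OF B]])
  fix x h assume x: "x \<in> carrier G" and h: "h \<in> A <#> B"
  then obtain a b where ab: "a \<in> A" "b \<in> B" "h = a \<otimes> b" unfolding set_mult_def by blast
  have "a \<in> carrier G" "b \<in> carrier G"
    using ab A B by (auto dest: normal_imp_subgroup subgroup.mem_carrier)
  then have "x \<otimes> h \<otimes> inv x = (x \<otimes> a \<otimes> inv x) \<otimes> (x \<otimes> b \<otimes> inv x)"
    using x ab(3) by (simp add: cancel_simps)
  moreover have "x \<otimes> a \<otimes> inv x \<in> A" "x \<otimes> b \<otimes> inv x \<in> B"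
    using A B ab x by (auto intro: normal.inv_op_closed2)
  ultimately show "x \<otimes> h \<otimes> inv x \<in> A <#> B" unfolding set_mult_def by blast
qed

lemma set_mult_subset_subgroup:
  assumes "subgroup M G" "A \<subseteq> M" "B \<subseteq> M"
  shows "A <#> B \<subseteq> M"
  using assms unfolding set_mult_def by (auto intro: subgroup.m_closed)

lemma power_subgroup_normal:
  assumes V: "V \<lhd> G"
  shows "generate G {x [^] (n::nat) | x. x \<in> V} \<lhd> G"
proof (rule normal_generateI)
  have "subgroup V G" by (rule normal_imp_subgroup[OF V])
  then show "{x [^] n | x. x \<in> V} \<subseteq> carrier G" by (auto dest: subgroup.mem_carrier)
  fix h g assume "h \<in> {x [^] n | x. x \<in> V}" and g: "g \<in> carrier G"
  then obtain x where x: "h = x [^] n" "x \<in> V" by blast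
  then have "g \<otimes> h \<otimes> inv g = (g \<otimes> x \<otimes> inv g) [^] n"
    using g \<open>subgroup V G\<close> by (simp add: conj_nat_pow subgroup.mem_carrier)
  moreover have "g \<otimes> x \<otimes> inv g \<in> V" using V g x(2) by (rule normal.inv_op_closed2)
  ultimately show "g \<otimes> h \<otimes> inv g \<in> {x [^] n | x. x \<in> V}" by blast
qed

lemma subgroup_nat_pow_closed: "subgroup H G \<Longrightarrow> x \<in> H \<Longrightarrow> x [^] (n::nat) \<in> H"
  by (induction n) (auto intro: subgroup.m_closed subgroup.one_closed)

lemma power_subgroup_subset:
  assumes "subgroup V G"
  shows "generate G {x [^] (n::nat) | x. x \<in> V} \<subseteq> V"
  using assms by (intro generate_subgroup_incl) (auto intro: subgroup_nat_pow_closed)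

lemma commutator_in_comm_subgroup:
  "x \<in> U \<Longrightarrow> y \<in> W \<Longrightarrow> x \<otimes> y \<otimes> inv x \<otimes> inv y \<in> comm_subgroup G U W"
  unfolding comm_subgroup_def by (intro generate.incl) auto

lemma comm_subgroup_subset:
  assumes "subgroup N G" "\<And>x y. x \<in> U \<Longrightarrow> y \<in> W \<Longrightarrow> x \<otimes> y \<otimes> inv x \<otimes> inv y \<in> N"
  shows "comm_subgroup G U W \<subseteq> N"
  unfolding comm_subgroup_def using assms by (intro generate_subgroup_incl) auto

lemma comm_subgroup_normal:
  assumes U: "U \<lhd> G" and W: "W \<lhd> G"
  shows "comm_subgroup G U W \<lhd> G"
  unfolding comm_subgroup_def
proof (rule normal_generateI)
  have "U \<subseteq> carrier G" "W \<subseteq> carrier G"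
    using U W by (auto dest: normal_imp_subgroup subgroup.mem_carrier)
  then show "{a \<otimes> b \<otimes> inv a \<otimes> inv b |a b. a \<in> U \<and> b \<in> W} \<subseteq> carrier G"
    by (auto simp: subset_iff)
  fix h g assume "h \<in> {a \<otimes> b \<otimes> inv a \<otimes> inv b |a b. a \<in> U \<and> b \<in> W}" and g: "g \<in> carrier G"
  then obtain a b where ab: "h = a \<otimes> b \<otimes> inv a \<otimes> inv b" "a \<in> U" "b \<in> W" by blast
  have "a \<in> carrier G" "b \<in> carrier G"
    using ab \<open>U \<subseteq> carrier G\<close> \<open>W \<subseteq> carrier G\<close> by auto
  then have "g \<otimes> h \<otimes> inv g =
      (g \<otimes> a \<otimes> inv g) \<otimes> (g \<otimes> b \<otimes> inv g) \<otimes> inv (g \<otimes> a \<otimes> inv g) \<otimes> inv (g \<otimes> b \<otimes> inv g)"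
    unfolding ab(1) by (rule conj_commutator[OF g])
  moreover have "g \<otimes> a \<otimes> inv g \<in> U" "g \<otimes> b \<otimes> inv g \<in> W"
    using U W g ab by (auto intro: normal.inv_op_closed2)
  ultimately show "g \<otimes> h \<otimes> inv g \<in> {a \<otimes> b \<otimes> inv a \<otimes> inv b |a b. a \<in> U \<and> b \<in> W}" by blast
qed

lemma commutator_generate_closed:
  assumes N: "N \<lhd> G" and S: "S \<subseteq> carrier G" and x: "x \<in> carrier G"
    and comm: "\<And>s. s \<in> S \<Longrightarrow> x \<otimes> s \<otimes> inv x \<otimes> inv s \<in> N"
    and d: "d \<in> generate G S"
  shows "x \<otimes> d \<otimes> inv x \<otimes> inv d \<in> N"
  using d
proof (induction rule: generate.induct)
  case one
  then show ?case using x N by (simp add: normal_imp_subgroup subgroup.one_closed)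
next
  case (incl s)
  then show ?case by (rule comm)
next
  case (inv s)
  have s: "s \<in> carrier G" using inv S by auto
  have "inv (x \<otimes> s \<otimes> inv x \<otimes> inv s) \<in> N"
    using comm[OF inv] normal_imp_subgroup[OF N] by (rule subgroup.m_inv_closed[rotated])
  then have "inv s \<otimes> inv (x \<otimes> s \<otimes> inv x \<otimes> inv s) \<otimes> inv (inv s) \<in> N"
    using N s by (intro normal.inv_op_closed2) auto
  then show ?case using commutator_inv_right x s by simp
next
  case (eng s t)
  have st: "s \<in> carrier G" "t \<in> carrier G" using eng generate_in_carrier S by auto
  have "s \<otimes> (x \<otimes> t \<otimes> inv x \<otimes> inv t) \<otimes> inv s \<in> N"
    using N st(1) eng.IH(2) by (rule normal.inv_op_closed2)
  with eng.IH(1) have "(x \<otimes> s \<otimes> inv x \<otimes> inv s) \<otimes> (s \<otimes> (x \<otimes> t \<otimes> inv x \<otimes> inv t) \<otimes> inv s) \<in> N"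
    by (rule subgroup.m_closed[OF normal_imp_subgroup[OF N]])
  then show ?case using commutator_mult_right x st by simp
qed

lemma comm_subgroup_consistent:
  assumes H: "subgroup H G" and "U \<subseteq> H" "W \<subseteq> H"
  shows "comm_subgroup (G\<lparr>carrier := H\<rparr>) U W = comm_subgroup G U W"
proof -
  let ?S = "{a \<otimes> b \<otimes> inv a \<otimes> inv b |a b. a \<in> U \<and> b \<in> W}"
  have "a \<otimes>\<^bsub>G\<lparr>carrier := H\<rparr>\<^esub> b \<otimes>\<^bsub>G\<lparr>carrier := H\<rparr>\<^esub> inv\<^bsub>G\<lparr>carrier := H\<rparr>\<^esub> a
      \<otimes>\<^bsub>G\<lparr>carrier := H\<rparr>\<^esub> inv\<^bsub>G\<lparr>carrier := H\<rparr>\<^esub> b = a \<otimes> b \<otimes> inv a \<otimes> inv b"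
    if "a \<in> U" "b \<in> W" for a b
  proof -
    have "a \<in> H" "b \<in> H" using that assms by auto
    then show ?thesis using H by simp
  qed
  then have "{a \<otimes>\<^bsub>G\<lparr>carrier := H\<rparr>\<^esub> b \<otimes>\<^bsub>G\<lparr>carrier := H\<rparr>\<^esub> inv\<^bsub>G\<lparr>carrier := H\<rparr>\<^esub> a
      \<otimes>\<^bsub>G\<lparr>carrier := H\<rparr>\<^esub> inv\<^bsub>G\<lparr>carrier := H\<rparr>\<^esub> b |a b. a \<in> U \<and> b \<in> W} = ?S"
    by (intro Collect_cong) metis
  moreover have "?S \<subseteq> H"
    using assms subgroup_commutator_closed by blast
  ultimately show ?thesis
    unfolding comm_subgroup_def by (simp add: generate_consistent[OF _ H])
qed

end

section \<open>Fitting's theorem\<close>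

primrec lower_central_of :: "('a, 'b) monoid_scheme \<Rightarrow> 'a set \<Rightarrow> nat \<Rightarrow> 'a set" where
  "lower_central_of G A 0 = A"
| "lower_central_of G A (Suc n) = comm_subgroup G A (lower_central_of G A n)"

text \<open>\<open>lower_central_term G A p\<close> is \<open>\<gamma>\<^sub>p(A)\<close> in the indexing \<open>\<gamma>\<^sub>1(A) = A\<close>, extended by \<open>\<gamma>\<^sub>0(A) = G\<close>
  so that \<open>[A, \<gamma>\<^sub>p(A)] \<le> \<gamma>\<^sub>p\<^sub>+\<^sub>1(A)\<close> for every \<open>p\<close>. The elements of total weight \<open>n + 1\<close> in the
  two filtrations generate a subgroup containing \<open>\<gamma>\<^sub>n\<^sub>+\<^sub>1(AB)\<close>; this is why \<open>AB\<close> is nilpotent.\<close>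

primrec lower_central_term :: "('a, 'b) monoid_scheme \<Rightarrow> 'a set \<Rightarrow> nat \<Rightarrow> 'a set" where
  "lower_central_term G A 0 = carrier G"
| "lower_central_term G A (Suc p) = lower_central_of G A p"

definition lower_central_mixed :: "('a, 'b) monoid_scheme \<Rightarrow> 'a set \<Rightarrow> 'a set \<Rightarrow> nat \<Rightarrow> 'a set" where
  "lower_central_mixed G A B n =
    {x. \<exists>p q. p + q = Suc n \<and> x \<in> lower_central_term G A p \<and> x \<in> lower_central_term G B q}"

context group begin

lemma lower_central_of_normal: "A \<lhd> G \<Longrightarrow> lower_central_of G A n \<lhd> G"
  by (induction n) (simp_all add: comm_subgroup_normal)

lemma lower_central_of_Suc_subset:
  assumes A: "A \<lhd> G"
  shows "lower_central_of G A (Suc n) \<subseteq> lower_central_of G A n"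
proof -
  have N: "lower_central_of G A n \<lhd> G" by (rule lower_central_of_normal[OF A])
  have "A \<subseteq> carrier G" using A by (auto dest: normal_imp_subgroup subgroup.mem_carrier)
  then show ?thesis
    unfolding lower_central_of.simps
    by (intro comm_subgroup_subset[OF normal_imp_subgroup[OF N]] normal_commutator_closed_right[OF N])
      auto
qed

lemma lower_central_of_antimono:
  assumes "A \<lhd> G" "m \<le> n"
  shows "lower_central_of G A n \<subseteq> lower_central_of G A m"
  using assms(2) by (induction rule: dec_induct) (use lower_central_of_Suc_subset[OF assms(1)] in blast)+

lemma lower_central_of_subset:
  assumes "subgroup A G"
  shows "lower_central_of G A n \<subseteq> A"
  by (induction n)
    (auto intro!: comm_subgroup_subset[OF assms] intro: subgroup_commutator_closed[OF assms])

lemma lower_central_restrict: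
  assumes A: "subgroup A G"
  shows "lower_central (G\<lparr>carrier := A\<rparr>) n = lower_central_of G A n"
  by (induction n)
    (simp_all add: comm_subgroup_consistent[OF A] lower_central_of_subset[OF A])

lemma nilpotent_subgroup_iff:
  assumes A: "subgroup A G"
  shows "nilpotent (G\<lparr>carrier := A\<rparr>) \<longleftrightarrow> (\<exists>n. lower_central_of G A n = {\<one>})"
  using subgroup_imp_group[OF A] lower_central_restrict[OF A] by (simp add: nilpotent_def)

lemma lower_central_term_normal: "A \<lhd> G \<Longrightarrow> lower_central_term G A p \<lhd> G"
  by (cases p) (simp_all add: normal_self lower_central_of_normal)

lemma commutator_lower_central_term:
  assumes A: "A \<lhd> G" and a: "a \<in> A" and y: "y \<in> lower_central_term G A p"
  shows "a \<otimes> y \<otimes> inv a \<otimes> inv y \<in> lower_central_term G A (Suc p)"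
proof (cases p)
  case 0
  then show ?thesis
    using y normal_commutator_closed_left[OF A _ a] by simp
next
  case (Suc q)
  then show ?thesis
    using y commutator_in_comm_subgroup[OF a] by simp
qed

lemma lower_central_mixedI:
  "x \<in> lower_central_term G A p \<Longrightarrow> x \<in> lower_central_term G B q \<Longrightarrow> p + q = Suc n
    \<Longrightarrow> x \<in> lower_central_mixed G A B n"
  unfolding lower_central_mixed_def by blast

lemma lower_central_mixed_in_carrier: "A \<lhd> G \<Longrightarrow> lower_central_mixed G A B n \<subseteq> carrier G"
  unfolding lower_central_mixed_def
  using lower_central_term_normal by (blast dest: normal_imp_subgroup subgroup.mem_carrier)

lemma lower_central_mixed_generate_normal:
  assumes A: "A \<lhd> G" and B: "B \<lhd> G"
  shows "generate G (lower_central_mixed G A B n) \<lhd> G"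
proof (rule normal_generateI[OF lower_central_mixed_in_carrier[OF A]])
  fix h g assume "h \<in> lower_central_mixed G A B n" and g: "g \<in> carrier G"
  then obtain p q where "p + q = Suc n" "h \<in> lower_central_term G A p" "h \<in> lower_central_term G B q"
    unfolding lower_central_mixed_def by blast
  with g show "g \<otimes> h \<otimes> inv g \<in> lower_central_mixed G A B n"
    unfolding lower_central_mixed_def
    by (blast intro: normal.inv_op_closed2 lower_central_term_normal[OF A] lower_central_term_normal[OF B])
qed

lemma lower_central_mixed_commute: "lower_central_mixed G A B n = lower_central_mixed G B A n"
  unfolding lower_central_mixed_def by (metis (no_types, opaque_lifting) add.commute)

lemma commutator_lower_central_mixed:
  assumes A: "A \<lhd> G" and B: "B \<lhd> G" and a: "a \<in> A" and s: "s \<in> lower_central_mixed G A B n"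
  shows "a \<otimes> s \<otimes> inv a \<otimes> inv s \<in> lower_central_mixed G A B (Suc n)"
proof -
  obtain p q where pq: "p + q = Suc n" "s \<in> lower_central_term G A p" "s \<in> lower_central_term G B q"
    using s unfolding lower_central_mixed_def by blast
  have "a \<otimes> s \<otimes> inv a \<otimes> inv s \<in> lower_central_term G A (Suc p)"
    by (rule commutator_lower_central_term[OF A a pq(2)])
  moreover have "a \<in> carrier G" using A a by (auto dest: normal_imp_subgroup subgroup.mem_carrier)
  then have "a \<otimes> s \<otimes> inv a \<otimes> inv s \<in> lower_central_term G B q"
    by (rule normal_commutator_closed_right[OF lower_central_term_normal[OF B] _ pq(3)])
  moreover have "Suc p + q = Suc (Suc n)" using pq(1) by simp
  ultimately show ?thesis by (rule lower_central_mixedI)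
qed

lemma commutator_set_mult_lower_central_mixed:
  assumes A: "A \<lhd> G" and B: "B \<lhd> G"
    and x: "x \<in> A <#> B" and s: "s \<in> lower_central_mixed G A B n"
  shows "x \<otimes> s \<otimes> inv x \<otimes> inv s \<in> generate G (lower_central_mixed G A B (Suc n))"
    (is "_ \<in> ?D")
proof -
  have D: "?D \<lhd> G" by (rule lower_central_mixed_generate_normal[OF A B])
  obtain a b where ab: "a \<in> A" "b \<in> B" "x = a \<otimes> b" using x unfolding set_mult_def by auto
  have carr: "a \<in> carrier G" "b \<in> carrier G" "s \<in> carrier G"
    using ab s A B lower_central_mixed_in_carrier[OF A]
    by (auto dest: normal_imp_subgroup subgroup.mem_carrier)
  have "b \<otimes> s \<otimes> inv b \<otimes> inv s \<in> lower_central_mixed G A B (Suc n)"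
    using commutator_lower_central_mixed[OF B A ab(2)] s by (simp add: lower_central_mixed_commute)
  then have "a \<otimes> (b \<otimes> s \<otimes> inv b \<otimes> inv s) \<otimes> inv a \<in> ?D"
    by (intro normal.inv_op_closed2[OF D carr(1)] generate.incl)
  moreover have "a \<otimes> s \<otimes> inv a \<otimes> inv s \<in> ?D"
    using commutator_lower_central_mixed[OF A B ab(1) s] by (rule generate.incl)
  ultimately show ?thesis
    unfolding ab(3) commutator_mult_left[OF carr] by (rule generate.eng)
qed

lemma lower_central_of_set_mult_subset:
  assumes A: "A \<lhd> G" and B: "B \<lhd> G"
  shows "lower_central_of G (A <#> B) n \<subseteq> generate G (lower_central_mixed G A B n)"
proof (induction n)
  case 0
  have "A \<subseteq> carrier G" "B \<subseteq> carrier G"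
    using A B by (auto dest: normal_imp_subgroup subgroup.mem_carrier)
  then have "A \<subseteq> lower_central_mixed G A B 0" "B \<subseteq> lower_central_mixed G A B 0"
    using lower_central_mixedI[of _ A "Suc 0" B 0 0] lower_central_mixedI[of _ A 0 B "Suc 0" 0]
    by auto
  then show ?case
    unfolding lower_central_of.simps set_mult_def by (auto intro: generate.eng generate.incl)
next
  case (Suc n)
  let ?D = "generate G (lower_central_mixed G A B (Suc n))"
  have D: "?D \<lhd> G" by (rule lower_central_mixed_generate_normal[OF A B])
  have AB: "A <#> B \<subseteq> carrier G"
    using normal_set_mult[OF A B] by (auto dest: normal_imp_subgroup subgroup.mem_carrier)
  show ?case
    unfolding lower_central_of.simps
  proof (rule comm_subgroup_subset[OF normal_imp_subgroup[OF D]])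
    fix x y assume x: "x \<in> A <#> B" and "y \<in> lower_central_of G (A <#> B) n"
    then have "y \<in> generate G (lower_central_mixed G A B n)" using Suc.IH by blast
    moreover have "x \<in> carrier G" using AB x by blast
    ultimately show "x \<otimes> y \<otimes> inv x \<otimes> inv y \<in> ?D"
      using commutator_set_mult_lower_central_mixed[OF A B x]
      by (blast intro: commutator_generate_closed[OF D lower_central_mixed_in_carrier[OF A]])
  qed
qed

lemma lower_central_term_subset_trivial:
  assumes A: "A \<lhd> G" and c: "lower_central_of G A c = {\<one>}" and "c < p"
  shows "lower_central_term G A p \<subseteq> {\<one>}"
proof -
  obtain q where "p = Suc q" "c \<le> q" using \<open>c < p\<close> by (cases p) auto
  then show ?thesis using lower_central_of_antimono[OF A] c by auto
qed

lemma lower_central_mixed_trivial: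
  assumes A: "A \<lhd> G" and B: "B \<lhd> G"
    and c: "lower_central_of G A c = {\<one>}" and d: "lower_central_of G B d = {\<one>}"
  shows "lower_central_mixed G A B (c + d + 1) \<subseteq> {\<one>}"
proof
  fix x assume "x \<in> lower_central_mixed G A B (c + d + 1)"
  then obtain p q where pq: "p + q = Suc (c + d + 1)"
    "x \<in> lower_central_term G A p" "x \<in> lower_central_term G B q"
    unfolding lower_central_mixed_def by blast
  then consider "c < p" | "d < q" by linarith
  then show "x \<in> {\<one>}"
    using pq lower_central_term_subset_trivial[OF A c] lower_central_term_subset_trivial[OF B d]
    by cases blast+
qed

lemma nilpotent_set_mult:
  assumes A: "A \<lhd> G" and B: "B \<lhd> G"
    and nA: "nilpotent (G\<lparr>carrier := A\<rparr>)" and nB: "nilpotent (G\<lparr>carrier := B\<rparr>)"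
  shows "nilpotent (G\<lparr>carrier := A <#> B\<rparr>)"
proof -
  obtain c where c: "lower_central_of G A c = {\<one>}"
    using nA nilpotent_subgroup_iff[OF normal_imp_subgroup[OF A]] by blast
  obtain d where d: "lower_central_of G B d = {\<one>}"
    using nB nilpotent_subgroup_iff[OF normal_imp_subgroup[OF B]] by blast
  have AB: "A <#> B \<lhd> G" by (rule normal_set_mult[OF A B])
  have "generate G (lower_central_mixed G A B (c + d + 1)) \<subseteq> {\<one>}"
    by (rule generate_subgroup_incl[OF lower_central_mixed_trivial[OF A B c d] triv_subgroup])
  then have "lower_central_of G (A <#> B) (c + d + 1) \<subseteq> {\<one>}"
    using lower_central_of_set_mult_subset[OF A B] by (rule order_trans[rotated])
  moreover have "\<one> \<in> lower_central_of G (A <#> B) (c + d + 1)"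
    using lower_central_of_normal[OF AB] by (blast dest: normal_imp_subgroup subgroup.one_closed)
  ultimately show ?thesis
    using nilpotent_subgroup_iff[OF normal_imp_subgroup[OF AB]] by blast
qed

lemma ex_greatest_nilpotent_normal:
  assumes fin: "finite (carrier G)"
  shows "\<exists>N. N \<lhd> G \<and> nilpotent (G\<lparr>carrier := N\<rparr>) \<and>
    (\<forall>M. M \<lhd> G \<and> nilpotent (G\<lparr>carrier := M\<rparr>) \<longrightarrow> M \<subseteq> N)"
proof -
  define S where "S = {N. N \<lhd> G \<and> nilpotent (G\<lparr>carrier := N\<rparr>)}"
  have "S \<subseteq> Pow (carrier G)"
    unfolding S_def by (auto dest: normal_imp_subgroup subgroup.mem_carrier)
  then have "finite S" using fin by (simp add: finite_subset)
  have "nilpotent (G\<lparr>carrier := {\<one>}\<rparr>)"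
    unfolding nilpotent_subgroup_iff[OF triv_subgroup] by (rule exI[of _ 0]) simp
  then have "{\<one>} \<in> S" unfolding S_def using one_is_normal by blast
  then have "Max (card ` S) \<in> card ` S" using \<open>finite S\<close> by (intro Max_in) auto
  then obtain N where N: "N \<in> S" "card N = Max (card ` S)" by (metis imageE)
  have "M \<subseteq> N" if M: "M \<in> S" for M
  proof -
    have nM: "M \<lhd> G" "nilpotent (G\<lparr>carrier := M\<rparr>)" and nN: "N \<lhd> G" "nilpotent (G\<lparr>carrier := N\<rparr>)"
      using M N(1) unfolding S_def by auto
    interpret second_isomorphism_grp M G N
      using nM(1) nN(1) normal_imp_subgroup
      by (simp add: second_isomorphism_grp_def second_isomorphism_grp_axioms_def)
    have "M <#> N \<in> S"
      unfolding S_def using normal_set_mult[OF nM(1) nN(1)] nilpotent_set_mult[OF nM(1) nN(1) nM(2) nN(2)]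
      by simp
    then have "card (M <#> N) \<le> card N" using N(2) \<open>finite S\<close> by simp
    moreover have "finite (M <#> N)"
      using fin subgroup.subset[OF normal_set_mult_subgroup] by (rule rev_finite_subset)
    ultimately have "N = M <#> N" using S_contained_in_set_mult by (rule card_seteq[rotated -1])
    then show ?thesis using H_contained_in_set_mult by simp
  qed
  then show ?thesis using N(1) unfolding S_def by blast
qed

lemma Fitting_normal:
  assumes "finite (carrier G)"
  shows "Fitting G \<lhd> G"
proof -
  obtain N where N: "N \<lhd> G" "nilpotent (G\<lparr>carrier := N\<rparr>)"
    and max: "\<forall>M. M \<lhd> G \<and> nilpotent (G\<lparr>carrier := M\<rparr>) \<longrightarrow> M \<subseteq> N"
    using ex_greatest_nilpotent_normal[OF assms] by blast
  have "Fitting G = N"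
    unfolding Fitting_def
  proof (rule the_equality)
    fix Z assume Z: "Z \<lhd> G \<and> nilpotent (G\<lparr>carrier := Z\<rparr>) \<and>
      (\<forall>M. M \<lhd> G \<and> nilpotent (G\<lparr>carrier := M\<rparr>) \<longrightarrow> M \<subseteq> Z)"
    then have "Z \<subseteq> N" "N \<subseteq> Z" using N max by simp_all
    then show "Z = N" by (rule subset_antisym)
  qed (use N max in simp)
  then show ?thesis using N(1) by simp
qed

lemma Fitting_subgroup: "finite (carrier G) \<Longrightarrow> subgroup (Fitting G) G"
  by (rule normal_imp_subgroup[OF Fitting_normal])

end

section \<open>Abelian groups of squarefree exponent\<close>

lemma prime_set_idempotents:
  fixes I :: "nat set"
  assumes I: "finite I" "\<forall>p\<in>I. Factorial_Ring.prime p"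
  obtains e where "\<And>p. p \<in> I \<Longrightarrow> e p mod p = 1" "\<And>p. p \<in> I \<Longrightarrow> \<Prod>I dvd p * e p"
proof -
  have "\<exists>m. m mod p = 1 \<and> \<Prod>I dvd p * m" if p: "p \<in> I" for p
  proof -
    let ?r = "\<Prod>(I - {p})"
    have "?r \<noteq> 0" using I by auto
    moreover have "coprime ?r p"
      using I p by (intro prod_coprime_left primes_coprime) auto
    ultimately obtain x y where xy: "?r * x = p * y + 1"
      using bezout_nat[of ?r p] by auto
    have "p > 1" using I p prime_gt_1_nat by blast
    then have "(?r * x) mod p = 1" unfolding xy by (metis add.commute mod_less mod_mult_self2)
    moreover have "\<Prod>I = p * ?r" using prod.remove[OF I(1) p, of "\<lambda>x. x"] by simp
    ultimately show ?thesis by (intro exI[of _ "?r * x"]) simp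
  qed
  then show ?thesis using that by metis
qed

lemma (in comm_monoid) finprod_nat_pow:
  assumes f: "f \<in> A \<rightarrow> carrier G"
  shows "finprod G f A [^] (n::nat) = finprod G (\<lambda>a. f a [^] n) A"
proof (induction n)
  case (Suc n)
  then show ?case using f by (simp add: Pi_def)
qed simp

context group begin

lemma nat_pow_eq_self_if_mod:
  assumes z: "z \<in> carrier G" "z [^] (p::nat) = \<one>" and "e mod p = 1"
  shows "z [^] e = z"
proof -
  have ep: "e = p * (e div p) + 1" using assms(3) mult_div_mod_eq[of p e] by simp
  have "z [^] e = (z [^] p) [^] (e div p) \<otimes> z" using z(1) by (subst (1) ep) (simp add: nat_pow_pow)
  also have "\<dots> = z" using z by (simp del: nat_pow_pow)
  finally show ?thesis .
qed

lemma nat_pow_eq_one_if_dvd: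
  assumes z: "z \<in> carrier G" "z [^] (q::nat) = \<one>" and "q dvd e"
  shows "z [^] e = \<one>"
proof -
  have "ord z dvd q" using z pow_eq_id by blast
  then have "ord z dvd e" using \<open>q dvd e\<close> by (rule dvd_trans)
  then show ?thesis using pow_eq_id[OF z(1)] by blast
qed

end

context comm_group begin

lemma exponent_subgroup: "subgroup {y \<in> carrier G. y [^] (n::nat) = \<one>} G"
  by (rule subgroupI) (auto simp: nat_pow_inv pow_mult_distrib m_comm)

lemma elementary_abelian_exponent_subgroup:
  assumes "Factorial_Ring.prime (p::nat)"
  shows "elementary_abelian (G\<lparr>carrier := {y \<in> carrier G. y [^] p = \<one>}\<rparr>)"
proof -
  interpret H: group "G\<lparr>carrier := {y \<in> carrier G. y [^] p = \<one>}\<rparr>"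
    by (rule subgroup_imp_group[OF exponent_subgroup])
  have "comm_group (G\<lparr>carrier := {y \<in> carrier G. y [^] p = \<one>}\<rparr>)"
    by (rule H.group_comm_groupI) (simp add: m_comm)
  then show ?thesis
    unfolding elementary_abelian_def using assms by (auto simp flip: nat_pow_consistent)
qed

lemma pow_idempotents_inj_on:
  fixes I :: "nat set"
  assumes I: "finite I" "\<forall>p\<in>I. Factorial_Ring.prime p" and exp: "\<forall>y\<in>carrier G. y [^] \<Prod>I = \<one>"
    and e: "\<And>p. p \<in> I \<Longrightarrow> e p mod p = 1"
  shows "inj_on (\<lambda>y. \<lambda>p\<in>I. y [^] e p) (carrier G)"
proof (rule inj_onI)
  fix x y assume x: "x \<in> carrier G" and y: "y \<in> carrier G"
    and eq: "(\<lambda>p\<in>I. x [^] e p) = (\<lambda>p\<in>I. y [^] e p)"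
  define z where "z = x \<otimes> inv y"
  have z: "z \<in> carrier G" unfolding z_def using x y by simp
  have zpow: "z [^] e p = \<one>" if "p \<in> I" for p
  proof -
    have "x [^] e p = y [^] e p" using eq that by (metis restrict_apply')
    then show ?thesis unfolding z_def using x y by (simp add: pow_mult_distrib m_comm nat_pow_inv)
  qed
  have "ord z = 1"
  proof (rule ccontr)
    assume "ord z \<noteq> 1"
    then obtain q where q: "Factorial_Ring.prime q" "q dvd ord z" using prime_factor_nat by blast
    have "ord z dvd \<Prod>I" using exp z pow_eq_id[OF z] by blast
    with q(2) have "q dvd \<Prod>I" by (rule dvd_trans)
    then obtain p where "p \<in> I" "q dvd p" using prime_dvd_prod_iff[OF I(1) q(1), of "\<lambda>x. x"] by auto
    then have "q = p" using I q(1) primes_dvd_imp_eq by blast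
    then have "q \<in> I" "ord z dvd e q" using \<open>p \<in> I\<close> zpow pow_eq_id[OF z] by auto
    then have "q dvd e q" using q(2) dvd_trans by blast
    then show False using e[OF \<open>q \<in> I\<close>] q(1) by (simp add: dvd_eq_mod_eq_0)
  qed
  then have "z = \<one>" using pow_eq_id[OF z, of 1] z by simp
  then show "x = y" unfolding z_def using x y inv_solve_right' by fastforce
qed

lemma pow_idempotents_surj_on:
  fixes I :: "nat set"
  assumes I: "finite I" "\<forall>p\<in>I. Factorial_Ring.prime p"
    and e: "\<And>p. p \<in> I \<Longrightarrow> e p mod p = 1" "\<And>p. p \<in> I \<Longrightarrow> \<Prod>I dvd p * e p"
  shows "(\<Pi>\<^sub>E p\<in>I. {y \<in> carrier G. y [^] p = \<one>}) \<subseteq> (\<lambda>y. \<lambda>p\<in>I. y [^] e p) ` carrier G"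
proof
  fix h assume h: "h \<in> (\<Pi>\<^sub>E p\<in>I. {y \<in> carrier G. y [^] p = \<one>})"
  then have hc: "h \<in> I \<rightarrow> carrier G" and hp: "\<And>p. p \<in> I \<Longrightarrow> h p [^] p = \<one>" by auto
  have other: "q dvd e p" if "p \<in> I" "q \<in> I" "q \<noteq> p" for p q
  proof -
    have "q dvd p * e p" using e(2)[OF that(1)] dvd_prodI[OF I(1) that(2), of "\<lambda>x. x"] by auto
    moreover have "\<not> q dvd p" using I that primes_dvd_imp_eq by blast
    ultimately show ?thesis using I that(2) prime_dvd_mult_iff by blast
  qed
  have "finprod G h I [^] e p = h p" if p: "p \<in> I" for p
  proof -
    have "finprod G h I [^] e p = finprod G (\<lambda>q. h q [^] e p) I"
      using hc by (rule finprod_nat_pow)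
    also have "\<dots> = finprod G (\<lambda>q. if p = q then h q else \<one>) I"
    proof (intro finprod_cong')
      fix q assume q: "q \<in> I"
      then have "h q \<in> carrier G" using hc by blast
      then show "h q [^] e p = (if p = q then h q else \<one>)"
        using nat_pow_eq_self_if_mod[OF _ hp e(1)] nat_pow_eq_one_if_dvd[OF _ hp other[OF p q]] p q
        by auto
    qed (use hc in auto)
    also have "\<dots> = h p" using p I(1) hc by (rule finprod_singleton)
    finally show ?thesis .
  qed
  then have "(\<lambda>p\<in>I. finprod G h I [^] e p) = h"
    using h by (intro extensionalityI[of _ I]) (auto simp: PiE_def)
  moreover have "finprod G h I \<in> carrier G" using hc by simp
  ultimately show "h \<in> (\<lambda>y. \<lambda>p\<in>I. y [^] e p) ` carrier G" by (intro rev_image_eqI) auto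
qed

lemma iso_product_exponent_subgroups:
  fixes I :: "nat set"
  assumes I: "finite I" "\<forall>p\<in>I. Factorial_Ring.prime p" and exp: "\<forall>y\<in>carrier G. y [^] \<Prod>I = \<one>"
  shows "G \<cong> product_group I (\<lambda>p. G\<lparr>carrier := {y \<in> carrier G. y [^] p = \<one>}\<rparr>)"
    (is "G \<cong> ?P")
proof -
  obtain e where e: "\<And>p. p \<in> I \<Longrightarrow> e p mod p = 1" "\<And>p. p \<in> I \<Longrightarrow> \<Prod>I dvd p * e p"
    using prime_set_idempotents[OF I] by blast
  have proj: "(y [^] e p) [^] p = \<one>" if y: "y \<in> carrier G" and p: "p \<in> I" for y p
  proof -
    obtain m where m: "p * e p = \<Prod>I * m" using e(2)[OF p] by (rule dvdE)
    have "(y [^] e p) [^] p = (y [^] \<Prod>I) [^] m"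
      using y by (simp add: nat_pow_pow mult.commute[of "e p"] m)
    then show ?thesis using exp y by simp
  qed
  let ?\<psi> = "\<lambda>y. \<lambda>p\<in>I. y [^] e p"
  have hom: "?\<psi> \<in> hom G ?P"
    by (rule homI) (auto simp: proj pow_mult_distrib m_comm)
  then have "?\<psi> ` carrier G = carrier ?P"
    using pow_idempotents_surj_on[OF I e] by (auto simp: hom_def)
  then show ?thesis
    using hom pow_idempotents_inj_on[OF I exp e(1)] by (intro is_isoI isoI) (auto simp: bij_betw_def)
qed

lemma dprod_elem_abelian_if_squarefree_exponent:
  fixes I :: "nat set"
  assumes "finite I" "\<forall>p\<in>I. Factorial_Ring.prime p" "\<forall>y\<in>carrier G. y [^] \<Prod>I = \<one>"
  shows "dprod_elem_abelian G"
  unfolding dprod_elem_abelian_def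
  using assms exponent_subgroup elementary_abelian_exponent_subgroup iso_product_exponent_subgroups[OF assms]
  by (intro exI[of _ I] exI[of _ "\<lambda>p. {y \<in> carrier G. y [^] p = \<one>}"]) auto

end

lemma product_group_nat_pow:
  assumes "\<And>i. i \<in> I \<Longrightarrow> group (G i)" and "f \<in> carrier (product_group I G)"
  shows "f [^]\<^bsub>product_group I G\<^esub> (n::nat) = (\<lambda>i\<in>I. f i [^]\<^bsub>G i\<^esub> n)"
  using assms by (induction n) (auto simp: restrict_def fun_eq_iff)

context group begin

lemma prime_order_pow_core:
  assumes z: "z \<in> carrier G" and p: "Factorial_Ring.prime (p::nat)" "z [^] p = \<one>"
    and n: "order G dvd n" "n > 0"
  shows "z [^] core n = \<one>"
proof -
  have "ord z dvd p" using p(2) pow_eq_id[OF z] by simp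
  then consider "ord z = 1" | "ord z = p" using p(1) by (auto simp: prime_nat_iff)
  then show ?thesis
  proof cases
    case 1
    then show ?thesis using pow_eq_id[OF z] by simp
  next
    case 2
    then have "p dvd n" using ord_dvd_group_order[OF z] n(1) by (metis dvd_trans)
    then have "p dvd core n"
      unfolding core_def using p(1) n(2) by (intro dvd_prodI) (auto simp: prime_factors_dvd)
    then show ?thesis using pow_eq_id[OF z] 2 by simp
  qed
qed

lemma dprod_elem_abelian_pow_core:
  assumes D: "dprod_elem_abelian G" and n: "order G dvd n" "n > 0" and y: "y \<in> carrier G"
  shows "y [^] core n = \<one>"
proof -
  obtain I :: "nat set" and H
    where HI: "\<And>i. i \<in> I \<Longrightarrow> subgroup (H i) G \<and> elementary_abelian (G\<lparr>carrier := H i\<rparr>)"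
      and "G \<cong> product_group I (\<lambda>i. G\<lparr>carrier := H i\<rparr>)"
    using D unfolding dprod_elem_abelian_def by blast
  let ?P = "product_group I (\<lambda>i. G\<lparr>carrier := H i\<rparr>)"
  obtain \<phi> where \<phi>: "\<phi> \<in> iso G ?P" using \<open>G \<cong> ?P\<close> unfolding is_iso_def by blast
  have grp: "\<And>i. i \<in> I \<Longrightarrow> group (G\<lparr>carrier := H i\<rparr>)" using HI subgroup_imp_group by blast
  then have "group ?P" by simp
  have pow_one: "z [^]\<^bsub>G\<lparr>carrier := H i\<rparr>\<^esub> core n = \<one>" if i: "i \<in> I" and z: "z \<in> H i" for i z
  proof -
    obtain p :: nat where p: "Factorial_Ring.prime p" "\<forall>x \<in> H i. x [^]\<^bsub>G\<lparr>carrier := H i\<rparr>\<^esub> p = \<one>"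
      using HI[OF i] unfolding elementary_abelian_def by auto
    have "z \<in> carrier G" using HI[OF i] z by (blast dest: subgroup.mem_carrier)
    moreover have "z [^] p = \<one>" using p(2) z by (simp flip: nat_pow_consistent)
    ultimately have "z [^] core n = \<one>" using p(1) n by (intro prime_order_pow_core)
    then show ?thesis by (simp flip: nat_pow_consistent)
  qed
  have hom: "\<phi> \<in> hom G ?P" and inj: "inj_on \<phi> (carrier G)"
    using \<phi> unfolding iso_def bij_betw_def by auto
  have \<phi>y: "\<phi> y \<in> carrier ?P" using hom y by (auto simp: hom_def)
  have "\<phi> (y [^] core n) = \<phi> y [^]\<^bsub>?P\<^esub> core n"
    by (rule hom_nat_pow[OF hom y is_group \<open>group ?P\<close>])
  also have "\<dots> = (\<lambda>i\<in>I. \<phi> y i [^]\<^bsub>G\<lparr>carrier := H i\<rparr>\<^esub> core n)"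
    by (rule product_group_nat_pow[OF grp \<phi>y])
  also have "\<dots> = \<one>\<^bsub>?P\<^esub>"
    using \<phi>y by (simp, intro restrict_ext pow_one) (auto intro: PiE_mem)
  also have "\<dots> = \<phi> \<one>" by (rule hom_one[OF hom is_group \<open>group ?P\<close>, symmetric])
  finally show ?thesis using inj y by (simp add: inj_on_eq_iff)
qed

end

section \<open>The \<open>F\<close>-central step\<close>

context normal begin

lemma FactGroup_rcos_pow_eq_one_iff:
  assumes x: "x \<in> carrier G"
  shows "(H #> x) [^]\<^bsub>G Mod H\<^esub> (n::nat) = \<one>\<^bsub>G Mod H\<^esub> \<longleftrightarrow> x [^] n \<in> H"
proof -
  have "(H #> x) [^]\<^bsub>G Mod H\<^esub> n = H #> (x [^] n)" by (rule FactGroup_pow[OF x])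
  moreover have "H #> (x [^] n) = H \<longleftrightarrow> x [^] n \<in> H"
    using rcos_self[OF _ subgroup_axioms, of "x [^] n"] rcos_const[OF is_group, of "x [^] n"] x
    by auto
  ultimately show ?thesis by simp
qed

lemma comm_group_FactGroup:
  assumes comm: "\<And>x y. x \<in> carrier G \<Longrightarrow> y \<in> carrier G \<Longrightarrow> x \<otimes> y \<otimes> inv x \<otimes> inv y \<in> H"
  shows "comm_group (G Mod H)"
proof (rule group.group_comm_groupI[OF factorgroup_is_group])
  fix A B assume "A \<in> carrier (G Mod H)" "B \<in> carrier (G Mod H)"
  then obtain x y where x: "x \<in> carrier G" "A = H #> x" and y: "y \<in> carrier G" "B = H #> y"
    by (auto simp: carrier_FactGroup)
  have "x \<otimes> y = (x \<otimes> y \<otimes> inv x \<otimes> inv y) \<otimes> (y \<otimes> x)"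
    using x y by (simp add: cancel_simps)
  then have "H #> (x \<otimes> y) = (H #> (x \<otimes> y \<otimes> inv x \<otimes> inv y)) #> (y \<otimes> x)"
    using x y by (simp add: coset_mult_assoc subset)
  also have "\<dots> = H #> (y \<otimes> x)"
    using comm[OF x(1) y(1)] by (simp add: rcos_const[OF is_group])
  finally show "A \<otimes>\<^bsub>G Mod H\<^esub> B = B \<otimes>\<^bsub>G Mod H\<^esub> A"
    using x y by (simp add: rcos_sum)
qed

end

lemma (in group) order_FactGroup_dvd:
  assumes V: "subgroup V G" and N: "N \<lhd> G\<lparr>carrier := V\<rparr>"
  shows "order (G\<lparr>carrier := V\<rparr> Mod N) dvd order G"
proof -
  interpret N: normal N "G\<lparr>carrier := V\<rparr>" by (rule N)
  have "order (G\<lparr>carrier := V\<rparr> Mod N) * card N = card V"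
    using N.lagrange[OF N.subgroup_axioms] by (simp add: FactGroup_def order_def)
  then have "order (G\<lparr>carrier := V\<rparr> Mod N) dvd card V" by (metis dvd_triv_left)
  moreover have "card (rcosets V) * card V = order G" by (rule lagrange[OF V])
  then have "card V dvd order G" by (metis dvd_triv_right)
  ultimately show ?thesis by (rule dvd_trans)
qed

lemma (in group) dprod_elem_abelian_FactGroup:
  fixes I :: "nat set"
  assumes V: "subgroup V G" and N: "N \<lhd> G" "N \<subseteq> V"
    and I: "finite I" "\<forall>p\<in>I. Factorial_Ring.prime p"
    and comm: "\<And>x y. x \<in> V \<Longrightarrow> y \<in> V \<Longrightarrow> x \<otimes> y \<otimes> inv x \<otimes> inv y \<in> N"
    and pow: "\<And>x. x \<in> V \<Longrightarrow> x [^] \<Prod>I \<in> N"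
  shows "dprod_elem_abelian (G\<lparr>carrier := V\<rparr> Mod N)"
proof -
  interpret Q: normal N "G\<lparr>carrier := V\<rparr>" by (rule normal_restrict_supergroup[OF V N])
  have "comm_group (G\<lparr>carrier := V\<rparr> Mod N)"
    using comm V by (intro Q.comm_group_FactGroup) simp
  moreover have "\<forall>A\<in>carrier (G\<lparr>carrier := V\<rparr> Mod N). A [^]\<^bsub>G\<lparr>carrier := V\<rparr> Mod N\<^esub> \<Prod>I = \<one>\<^bsub>G\<lparr>carrier := V\<rparr> Mod N\<^esub>"
    using pow Q.FactGroup_rcos_pow_eq_one_iff by (auto simp: carrier_FactGroup simp flip: nat_pow_consistent)
  ultimately show ?thesis using I by (intro comm_group.dprod_elem_abelian_if_squarefree_exponent)
qed

definition central_elem_abelian_section :: "('a, 'b) monoid_scheme \<Rightarrow> 'a set \<Rightarrow> 'a set \<Rightarrow> bool" where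
  "central_elem_abelian_section G V N \<longleftrightarrow> N \<lhd> G \<and> N \<subseteq> V \<and>
     (\<forall>g \<in> carrier G. \<forall>x \<in> V. g \<otimes>\<^bsub>G\<^esub> x \<otimes>\<^bsub>G\<^esub> inv\<^bsub>G\<^esub> g \<otimes>\<^bsub>G\<^esub> inv\<^bsub>G\<^esub> x \<in> N) \<and>
     dprod_elem_abelian ((G\<lparr>carrier := V\<rparr>) Mod N)"

context group begin

lemma central_elem_abelian_section_comm_power:
  assumes V: "V \<lhd> G"
  shows "central_elem_abelian_section G V
    (comm_subgroup G (carrier G) V <#> generate G {x [^] core (order G) | x. x \<in> V})"
    (is "central_elem_abelian_section G V (?C <#> ?P)")
proof -
  have Vsub: "subgroup V G" by (rule normal_imp_subgroup[OF V])
  have C: "?C \<lhd> G" by (rule comm_subgroup_normal[OF normal_self V])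
  have P: "?P \<lhd> G" by (rule power_subgroup_normal[OF V])
  interpret second_isomorphism_grp ?C G ?P
    using C P by (simp add: second_isomorphism_grp_def second_isomorphism_grp_axioms_def normal_imp_subgroup)
  have "?C \<subseteq> V" by (rule comm_subgroup_subset[OF Vsub normal_commutator_closed_right[OF V]])
  moreover have "?P \<subseteq> V" by (rule power_subgroup_subset[OF Vsub])
  ultimately have WV: "?C <#> ?P \<subseteq> V" by (rule set_mult_subset_subgroup[OF Vsub])
  have comm: "g \<otimes> x \<otimes> inv g \<otimes> inv x \<in> ?C <#> ?P" if "g \<in> carrier G" "x \<in> V" for g x
    using commutator_in_comm_subgroup[OF that] H_contained_in_set_mult by blast
  have pow: "x [^] \<Prod>(prime_factors (order G)) \<in> ?C <#> ?P" if "x \<in> V" for x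
    using that S_contained_in_set_mult by (force simp: core_def intro: generate.incl)
  have "dprod_elem_abelian (G\<lparr>carrier := V\<rparr> Mod (?C <#> ?P))"
    using Vsub normal_set_mult[OF C P] WV comm pow
    by (intro dprod_elem_abelian_FactGroup) (auto dest: subgroup.mem_carrier)
  then show ?thesis
    unfolding central_elem_abelian_section_def using normal_set_mult[OF C P] WV comm by simp
qed

lemma central_elem_abelian_section_least:
  assumes fin: "finite (carrier G)" and V: "subgroup V G" and M: "central_elem_abelian_section G V M"
  shows "comm_subgroup G (carrier G) V <#> generate G {x [^] core (order G) | x. x \<in> V} \<subseteq> M"
proof -
  have MN: "M \<lhd> G" and MV: "M \<subseteq> V"
    and comm: "\<And>g x. g \<in> carrier G \<Longrightarrow> x \<in> V \<Longrightarrow> g \<otimes> x \<otimes> inv g \<otimes> inv x \<in> M"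
    and D: "dprod_elem_abelian (G\<lparr>carrier := V\<rparr> Mod M)"
    using M unfolding central_elem_abelian_section_def by auto
  have Msub: "subgroup M G" by (rule normal_imp_subgroup[OF MN])
  have MVN: "M \<lhd> G\<lparr>carrier := V\<rparr>" by (rule normal_restrict_supergroup[OF V MN MV])
  interpret Q: normal M "G\<lparr>carrier := V\<rparr>" by (rule MVN)
  have "x [^] core (order G) \<in> M" if x: "x \<in> V" for x
  proof -
    have "order G > 0" using fin by (simp add: order_gt_0_iff_finite)
    then have "(M #> x) [^]\<^bsub>G\<lparr>carrier := V\<rparr> Mod M\<^esub> core (order G) = \<one>\<^bsub>G\<lparr>carrier := V\<rparr> Mod M\<^esub>"
      using order_FactGroup_dvd[OF V MVN] x
      by (intro group.dprod_elem_abelian_pow_core[OF Q.factorgroup_is_group D])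
        (auto simp: carrier_FactGroup)
    then show ?thesis using Q.FactGroup_rcos_pow_eq_one_iff x by (simp flip: nat_pow_consistent)
  qed
  then have "generate G {x [^] core (order G) | x. x \<in> V} \<subseteq> M"
    by (intro generate_subgroup_incl[OF _ Msub]) blast
  moreover have "comm_subgroup G (carrier G) V \<subseteq> M" by (rule comm_subgroup_subset[OF Msub comm])
  ultimately show ?thesis by (intro set_mult_subset_subgroup[OF Msub])
qed

end

lemma Fstep_ok_iff_central_elem_abelian_section:
  assumes G: "group G" and F: "subgroup (Fitting G) G" and VF: "V \<subseteq> Fitting G"
  shows "Fstep_ok G V N \<longleftrightarrow> central_elem_abelian_section (G\<lparr>carrier := Fitting G\<rparr>) V N"
proof -
  have "inv\<^bsub>G\<lparr>carrier := Fitting G\<rparr>\<^esub> x = inv\<^bsub>G\<^esub> x" if "x \<in> Fitting G" for x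
    using group.m_inv_consistent[OF G F that] .
  then show ?thesis
    unfolding Fstep_ok_def central_elem_abelian_section_def using VF by (auto simp: subset_iff)
qed

lemma Fcentral_Suc_eq:
  assumes G: "group G" and fin: "finite (carrier G)"
  defines "H \<equiv> G\<lparr>carrier := Fitting G\<rparr>"
  assumes V: "Fcentral G i \<lhd> H"
  shows "Fcentral G (Suc i) = comm_subgroup H (carrier H) (Fcentral G i) <#>\<^bsub>H\<^esub>
    generate H {x [^]\<^bsub>H\<^esub> core (order H) | x. x \<in> Fcentral G i}"
    (is "_ = ?W")
proof -
  have F: "subgroup (Fitting G) G" by (rule group.Fitting_subgroup[OF G fin])
  interpret H: group H unfolding H_def by (rule group.subgroup_imp_group[OF G F])
  have "finite (carrier H)"
    using fin subgroup.subset[OF F] unfolding H_def by (auto intro: finite_subset)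
  have "subgroup (Fcentral G i) H" by (rule normal_imp_subgroup[OF V])
  then have "Fcentral G i \<subseteq> Fitting G" using subgroup.subset unfolding H_def by fastforce
  then have step: "Fstep_ok G (Fcentral G i) = central_elem_abelian_section H (Fcentral G i)"
    unfolding H_def by (intro ext Fstep_ok_iff_central_elem_abelian_section[OF G F])
  have W: "central_elem_abelian_section H (Fcentral G i) ?W"
    by (rule H.central_elem_abelian_section_comm_power[OF V])
  have least: "?W \<subseteq> M" if "central_elem_abelian_section H (Fcentral G i) M" for M
    using \<open>finite (carrier H)\<close> \<open>subgroup (Fcentral G i) H\<close> that
    by (rule H.central_elem_abelian_section_least)
  show ?thesis
    unfolding Fcentral.simps step
  proof (rule the_equality)
    fix N
    assume "central_elem_abelian_section H (Fcentral G i) N \<and>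
      (\<forall>M. central_elem_abelian_section H (Fcentral G i) M \<longrightarrow> N \<subseteq> M)"
    then show "N = ?W" using W least by (blast intro: subset_antisym)
  qed (use W least in blast)
qed

lemma Fcentral_normal:
  assumes G: "group G" and fin: "finite (carrier G)"
  shows "Fcentral G i \<lhd> G\<lparr>carrier := Fitting G\<rparr>"
proof (induction i)
  case 0
  have "subgroup (Fitting G) G" by (rule group.Fitting_subgroup[OF G fin])
  then show ?case using group.normal_self[OF group.subgroup_imp_group[OF G]] by fastforce
next
  case (Suc i)
  have F: "subgroup (Fitting G) G" by (rule group.Fitting_subgroup[OF G fin])
  interpret H: group "G\<lparr>carrier := Fitting G\<rparr>" by (rule group.subgroup_imp_group[OF G F])
  show ?case
    using H.central_elem_abelian_section_comm_power[OF Suc.IH] Fcentral_Suc_eq[OF G fin Suc.IH]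
    by (simp add: central_elem_abelian_section_def)
qed

theorem lemma2p1:
  fixes G :: "('a, 'b) monoid_scheme" and i :: nat
  assumes "group G" and "finite (carrier G)"
  defines "k \<equiv> core (card (Fitting G))"
  shows "Fcentral G (Suc i) =
    comm_subgroup G (Fitting G) (Fcentral G i) <#>\<^bsub>G\<^esub>
    generate G {x [^]\<^bsub>G\<^esub> k | x. x \<in> Fcentral G i}"
proof -
  interpret group G by fact
  let ?H = "G\<lparr>carrier := Fitting G\<rparr>"
  have F: "subgroup (Fitting G) G" by (rule Fitting_subgroup[OF assms(2)])
  have V: "Fcentral G i \<lhd> ?H" by (rule Fcentral_normal[OF assms(1,2)])
  then have VF: "Fcentral G i \<subseteq> Fitting G" using subgroup.subset normal_imp_subgroup by fastforce
  have "{x [^]\<^bsub>G\<^esub> k | x. x \<in> Fcentral G i} \<subseteq> Fitting G"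
    using VF subgroup_nat_pow_closed[OF F] by blast
  moreover have "Fcentral G (Suc i) = comm_subgroup ?H (Fitting G) (Fcentral G i) <#>\<^bsub>G\<^esub>
      generate ?H {x [^]\<^bsub>G\<^esub> k | x. x \<in> Fcentral G i}"
    using Fcentral_Suc_eq[OF assms(1,2) V] by (simp add: k_def order_def flip: nat_pow_consistent)
  ultimately show ?thesis
    by (simp add: comm_subgroup_consistent[OF F subset_refl VF] generate_consistent[OF _ F])
qed

end
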